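(* Assume $\mathrm{char}(\mathbb{F})=p>0$ and $\deg h\ge1$, regard $A_h\subseteq A_1$ via $x\mapsto x$, $\hat y\mapsto yh$, and let $c\in C_{A_h}(x)=\mathbb{F}[x,h^py^p]$. Then there is an injective $\mathbb{F}$-algebra homomorphism $\kappa_c:A_h\to A_h$ with $\kappa_c(\hat y)=\hat y+c$ and $\kappa_c(r)=r$ for all $r\in\mathbb{F}[x]$. If $c\notin\mathbb{F}[x]$, then $\kappa_c$ is not an automorphism of $A_h$.
   Context: For $h\in\mathbb{F}[x]$, $A_h$ is the unital associative $\mathbb{F}$-algebra generated by $x,\hat y$ with defining relation $\hat yx-x\hat y=h$. $A_1$ is the Weyl algebra, generated by $x,y$ with $yx-xy=1$; for $h\ne0$, $x\mapsto x,\hat y\mapsto yh$ embeds $A_h$ into $A_1$, and $h^py^p\in A_h$. $C_{A_h}(x)=\{a\in A_h: ax=xa\}$. *)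

theory Defs
  imports "HOL-Computational_Algebra.Polynomial"
begin

text \<open>Concrete model of the Weyl algebra A_1 over a field: an element is written
  uniquely in normal form  sum_j q_j(x) y^j  (coefficients in F[x] on the left),
  represented as a polynomial in y with coefficients in F[x], i.e. type 'a poly poly.
  The product uses  y^j r = sum_l (j choose l) r^(l) y^(j-l)  for r in F[x]
  (this encodes yx - xy = 1).\<close>

definition weyl_mult :: "'a::field poly poly \<Rightarrow> 'a poly poly \<Rightarrow> 'a poly poly" where
  "weyl_mult P Q =
     (\<Sum>j\<le>degree P. \<Sum>k\<le>degree Q. \<Sum>l\<le>j.
        monom (coeff P j * smult (of_nat (j choose l)) ((pderiv ^^ l) (coeff Q k))) (j - l + k))"

definition weyl_x :: "'a::field poly poly" where
  "weyl_x = [: [:0, 1:] :]"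

definition weyl_y :: "'a::field poly poly" where
  "weyl_y = [: 0, 1 :]"

definition weyl_polys :: "'a::field poly poly set" where
  "weyl_polys = {[: r :] | r. True}"

definition weyl_yhat :: "'a::field poly \<Rightarrow> 'a poly poly" where
  "weyl_yhat h = weyl_mult weyl_y [: h :]"

inductive_set A_h :: "'a::field poly \<Rightarrow> 'a poly poly set" for h where
  const: "[: [: a :] :] \<in> A_h h"
| gen_x: "weyl_x \<in> A_h h"
| gen_yhat: "weyl_yhat h \<in> A_h h"
| add: "a \<in> A_h h \<Longrightarrow> b \<in> A_h h \<Longrightarrow> a + b \<in> A_h h"
| mult: "a \<in> A_h h \<Longrightarrow> b \<in> A_h h \<Longrightarrow> weyl_mult a b \<in> A_h h"

definition centralizer_x :: "'a::field poly \<Rightarrow> 'a poly poly set" where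
  "centralizer_x h = {a \<in> A_h h. weyl_mult a weyl_x = weyl_mult weyl_x a}"

definition is_alg_endo :: "'a::field poly \<Rightarrow> ('a poly poly \<Rightarrow> 'a poly poly) \<Rightarrow> bool" where
  "is_alg_endo h \<kappa> \<longleftrightarrow>
     (\<forall>a\<in>A_h h. \<kappa> a \<in> A_h h) \<and>
     \<kappa> 1 = 1 \<and>
     (\<forall>a\<in>A_h h. \<forall>b\<in>A_h h. \<kappa> (a + b) = \<kappa> a + \<kappa> b) \<and>
     (\<forall>s. \<forall>a\<in>A_h h. \<kappa> (smult [: s :] a) = smult [: s :] (\<kappa> a)) \<and>
     (\<forall>a\<in>A_h h. \<forall>b\<in>A_h h. \<kappa> (weyl_mult a b) = weyl_mult (\<kappa> a) (\<kappa> b))"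

end

theory Submission
  imports Defs
begin

(* 1. Left multiplication by y acts on normal forms sum_j q_j y^j as ymul f = f' + y f,
      and P = sum_j p_j y^j acts as act P = sum_j p_j ymul^j.  The Leibniz rule gives
      act (weyl_mult P Q) = act P o act Q and act P 1 = P, so weyl_mult P Q = act P Q
      is associative and the normal forms become a ring, the type 'a weyl.
   2. The y-degree is additive under multiplication.
   3. If Y satisfies Y r = r Y + h r' for all r in F[x], the "polynomials in Y"
      ev Y R = sum_j r_j Y^j multiply by a rule that does not depend on Y, and for
      deg Y >= 1 we get deg (ev Y R) = deg R * deg Y; in particular ev Y is injective.
   4. y^ = y h satisfies this relation and A_h is exactly the image of ev y^.  Hence
      for every such Y in A_h the map ev y^ R |-> ev Y R is an injective endomorphism,
      and every endomorphism fixing F[x] with y^ |-> Y has image inside ev Y, which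
      misses y^ as soon as deg Y >= 2.
   5. An element c commuting with x commutes with F[x] and has y-degree different
      from 1, so Y = y^ + c satisfies the relation and has degree >= 2 unless c is in
      F[x]. *)


lemma sum_deg_bound:
  assumes "\<And>j. g 0 j = 0" "degree P \<le> N"
  shows "(\<Sum>j\<le>degree P. g (coeff P j) j) = (\<Sum>j\<le>N. g (coeff P j) j)"
  by (rule sum.mono_neutral_left) (use assms in \<open>auto simp: coeff_eq_0\<close>)

lemma smult_sum_right: "smult a (\<Sum>i\<in>A. f i) = (\<Sum>i\<in>A. smult a (f i))"
  by (induction A rule: infinite_finite_induct) (auto simp: smult_add_right)

text \<open>The general Leibniz rule: if an additive map D acts on a doubly indexed
  family like a derivation on a product, T l m = D^l u * D^m v, then D^j (T 0 0)
  expands binomially.\<close>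
lemma iterated_leibniz:
  fixes D :: "'b::comm_ring_1 \<Rightarrow> 'b" and T :: "nat \<Rightarrow> nat \<Rightarrow> 'b"
  assumes add: "\<And>x y. D (x + y) = D x + D y"
    and nat: "\<And>n x. D (of_nat n * x) = of_nat n * D x"
    and T: "\<And>l m. D (T l m) = T (Suc l) m + T l (Suc m)"
  shows "(D^^j) (T 0 0) = (\<Sum>l\<le>j. of_nat (j choose l) * T l (j - l))"
proof (induction j)
  case 0 then show ?case by simp
next
  case (Suc j)
  have D0: "D 0 = 0" using add[of 0 0] by simp
  have Dsum: "D (\<Sum>i\<in>A. g i) = (\<Sum>i\<in>A. D (g i))" if "finite A" for A :: "nat set" and g
    using that by (induction A rule: finite_induct) (simp_all add: add D0)
  have "(D^^Suc j) (T 0 0) = D (\<Sum>l\<le>j. of_nat (j choose l) * T l (j - l))"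
    using Suc by simp
  also have "\<dots> = (\<Sum>l\<le>j. of_nat (j choose l) * T (Suc l) (j - l))
                  + (\<Sum>l\<le>j. of_nat (j choose l) * T l (Suc (j - l)))"
    by (simp add: Dsum nat T algebra_simps sum.distrib)
  also have "(\<Sum>l\<le>j. of_nat (j choose l) * T l (Suc (j - l)))
      = T 0 (Suc j) + (\<Sum>l\<le>j. of_nat (j choose Suc l) * T (Suc l) (j - l))"
  proof -
    have "(\<Sum>l\<le>j. of_nat (j choose l) * T l (Suc (j - l)))
        = T 0 (Suc j) + (\<Sum>l<j. of_nat (j choose Suc l) * T (Suc l) (Suc (j - Suc l)))"
      by (simp add: lessThan_Suc_atMost[symmetric] sum.lessThan_Suc_shift del: sum.lessThan_Suc)
    also have "(\<Sum>l<j. of_nat (j choose Suc l) * T (Suc l) (Suc (j - Suc l)))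
        = (\<Sum>l\<le>j. of_nat (j choose Suc l) * T (Suc l) (j - l))"
      by (simp add: lessThan_Suc_atMost[symmetric] binomial_eq_0 Suc_diff_Suc)
    finally show ?thesis .
  qed
  finally have "(D^^Suc j) (T 0 0) = T 0 (Suc j) +
      (\<Sum>l\<le>j. of_nat (Suc j choose Suc l) * T (Suc l) (j - l))"
    by (simp add: sum.distrib algebra_simps)
  also have "\<dots> = (\<Sum>l\<le>Suc j. of_nat (Suc j choose l) * T l (Suc j - l))"
    by (subst sum.atMost_Suc_shift) simp
  finally show ?case .
qed


section \<open>The Weyl algebra acting on its normal forms\<close>

text \<open>Left multiplication by y on a normal form f = sum q_j y^j: since y q = q y + q',
  it is y f = sum (q_j' y^j + q_j y^(j+1)).\<close>
definition ymul :: "'a::field poly poly \<Rightarrow> 'a poly poly" where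
  "ymul f = map_poly pderiv f + pCons 0 f"

lemma coeff_ymul: "coeff (ymul f) i = pderiv (coeff f i) + (if i = 0 then 0 else coeff f (i - 1))"
  by (simp add: ymul_def coeff_map_poly coeff_pCons split: nat.split)

lemma ymul_add: "ymul (f + g) = ymul f + ymul g"
  by (simp add: poly_eq_iff coeff_ymul pderiv_add)

lemma ymul_0[simp]: "ymul 0 = 0"
  by (simp add: poly_eq_iff coeff_ymul)

lemma ymul_smult: "ymul (smult s f) = smult (pderiv s) f + smult s (ymul f)"
  by (simp add: poly_eq_iff coeff_ymul pderiv_mult algebra_simps)

lemma ymul_of_nat_mult: "ymul (of_nat n * f) = of_nat n * ymul f"
  by (induction n) (auto simp: ymul_add algebra_simps)

lemma funpow_ymul_add: "(ymul^^j) (f + g) = (ymul^^j) f + (ymul^^j) g"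
  by (induction j) (auto simp: ymul_add)

lemma funpow_ymul_0[simp]: "(ymul^^j) 0 = 0"
  by (induction j) auto

lemma funpow_ymul_smult:
  "(ymul^^j) (smult s f) =
     (\<Sum>l\<le>j. smult (smult (of_nat (j choose l)) ((pderiv^^l) s)) ((ymul^^(j - l)) f))"
proof -
  let ?T = "\<lambda>l m. smult ((pderiv^^l) s) ((ymul^^m) f)"
  have "(ymul^^j) (?T 0 0) = (\<Sum>l\<le>j. of_nat (j choose l) * ?T l (j - l))"
    by (rule iterated_leibniz) (simp_all add: ymul_add ymul_of_nat_mult ymul_smult)
  then show ?thesis by (simp add: of_nat_poly)
qed

text \<open>The operator by which P = sum p_j y^j acts on normal forms by left multiplication.\<close>
definition act :: "'a::field poly poly \<Rightarrow> 'a poly poly \<Rightarrow> 'a poly poly" where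
  "act P f = (\<Sum>j\<le>degree P. smult (coeff P j) ((ymul^^j) f))"

lemma act_bound: "degree P \<le> N \<Longrightarrow> act P f = (\<Sum>j\<le>N. smult (coeff P j) ((ymul^^j) f))"
  unfolding act_def by (rule sum_deg_bound) auto

lemma act_pCons: "act (pCons a P) f = smult a f + act P (ymul f)"
proof -
  have "act (pCons a P) f = (\<Sum>j\<le>Suc (degree P). smult (coeff (pCons a P) j) ((ymul^^j) f))"
    by (rule act_bound) (simp add: degree_pCons_le)
  also have "\<dots> = smult a f + (\<Sum>j\<le>degree P. smult (coeff P j) ((ymul^^j) (ymul f)))"
    by (subst sum.atMost_Suc_shift) (simp add: funpow_Suc_right del: funpow.simps)
  finally show ?thesis by (simp add: act_def)
qed

lemma act_add_left: "act (P + Q) f = act P f + act Q f"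
proof -
  let ?N = "max (degree P) (degree Q)"
  have "act (P + Q) f = (\<Sum>j\<le>?N. smult (coeff (P + Q) j) ((ymul^^j) f))"
    by (rule act_bound) (simp add: degree_add_le)
  also have "\<dots> = act P f + act Q f"
    by (simp add: act_bound[of P ?N] act_bound[of Q ?N] smult_add_left sum.distrib)
  finally show ?thesis .
qed

lemma act_add_right: "act P (f + g) = act P f + act P g"
  by (simp add: act_def funpow_ymul_add smult_add_right sum.distrib)

lemma act_0_left[simp]: "act 0 f = 0" and act_0_right[simp]: "act P 0 = 0"
  by (simp_all add: act_def)

lemma act_sum_left: "act (\<Sum>i\<in>A. P i) f = (\<Sum>i\<in>A. act (P i) f)"
  by (induction A rule: infinite_finite_induct) (auto simp: act_add_left)

lemma act_sum_right: "act P (\<Sum>i\<in>A. f i) = (\<Sum>i\<in>A. act P (f i))"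
  by (induction A rule: infinite_finite_induct) (auto simp: act_add_right)

lemma act_monom: "act (monom q m) f = smult q ((ymul^^m) f)"
proof -
  have "act (monom q m) f = (\<Sum>j\<le>m. smult (coeff (monom q m) j) ((ymul^^j) f))"
    by (rule act_bound) (simp add: degree_monom_le)
  also have "\<dots> = (\<Sum>j\<in>{m}. smult (coeff (monom q m) j) ((ymul^^j) f))"
    by (rule sum.mono_neutral_right) auto
  finally show ?thesis by simp
qed

text \<open>The defining product formula of weyl_mult is exactly composition of the
  corresponding operators; this is the source of associativity.\<close>
lemma act_weyl_mult: "act (weyl_mult P Q) f = act P (act Q f)"
proof -
  have ymul_pow: "(ymul^^a) ((ymul^^b) g) = (ymul^^(a + b)) g" for a b g
    by (simp add: funpow_add)
  have "act (weyl_mult P Q) f =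
     (\<Sum>j\<le>degree P. \<Sum>k\<le>degree Q. \<Sum>l\<le>j.
        smult (coeff P j * smult (of_nat (j choose l)) ((pderiv ^^ l) (coeff Q k)))
          ((ymul^^(j - l + k)) f))"
    by (simp add: weyl_mult_def act_sum_left act_monom)
  also have "\<dots> = (\<Sum>k\<le>degree Q. \<Sum>j\<le>degree P. \<Sum>l\<le>j.
        smult (coeff P j * smult (of_nat (j choose l)) ((pderiv ^^ l) (coeff Q k)))
          ((ymul^^(j - l + k)) f))"
    by (rule sum.swap)
  also have "\<dots> = (\<Sum>k\<le>degree Q. \<Sum>j\<le>degree P. \<Sum>l\<le>j.
        smult (coeff P j * smult (of_nat (j choose l)) ((pderiv ^^ l) (coeff Q k)))
          ((ymul^^(j - l)) ((ymul^^k) f)))"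
    by (intro sum.cong refl) (simp add: ymul_pow)
  also have "\<dots> = (\<Sum>k\<le>degree Q. act P (smult (coeff Q k) ((ymul^^k) f)))"
    by (simp add: act_def funpow_ymul_smult smult_sum_right)
  also have "\<dots> = act P (act Q f)"
    by (simp add: act_def[of Q] act_sum_right)
  finally show ?thesis .
qed

lemma funpow_ymul_monom: "(ymul^^j) (monom [:a:] n) = monom [:a:] (j + n)"
proof (induction j)
  case (Suc j)
  have "ymul (monom [:a:] n) = monom [:a:] (Suc n)" for n
    by (auto simp: poly_eq_iff coeff_ymul pderiv_pCons)
  then show ?case using Suc by simp
qed simp

lemma act_one: "act P 1 = P"
proof -
  have "act P (monom 1 n) = P * monom 1 n" for n
  proof (induction P arbitrary: n)
    case (pCons a P)
    have "ymul (monom 1 n) = (monom 1 (Suc n) :: 'a poly poly)"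
      using funpow_ymul_monom[of 1 1 n] by (simp add: one_pCons)
    then show ?case using pCons.IH[of "Suc n"]
      by (simp add: act_pCons smult_monom monom_Suc algebra_simps)
  qed simp
  from this[of 0] show ?thesis by simp
qed

lemma weyl_mult_eq_act: "weyl_mult P Q = act P Q"
  using act_weyl_mult[of P Q 1] by (simp add: act_one)

lemma act_smult_const: "act P (smult [:a:] f) = smult [:a:] (act P f)"
proof -
  have "(ymul^^j) (smult [:a:] f) = smult [:a:] ((ymul^^j) f)" for j
    by (induction j) (simp_all add: ymul_smult pderiv_pCons)
  then show ?thesis by (simp add: act_def smult_sum_right mult.commute)
qed

lemma act_degree:
  assumes "P \<noteq> 0" "f \<noteq> 0"
  shows "degree (act P f) = degree P + degree f \<and> lead_coeff (act P f) = lead_coeff P * lead_coeff f"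
  using assms
proof (induction P arbitrary: f)
  case (pCons a P)
  show ?case
  proof (cases "P = 0")
    case True
    then show ?thesis using pCons by (simp add: act_pCons lead_coeff_smult)
  next
    case False
    have ymul_lead: "degree (ymul f) = Suc (degree f) \<and> lead_coeff (ymul f) = lead_coeff f"
    proof -
      have "degree (map_poly pderiv f) \<le> degree f"
        by (rule degree_le) (simp add: coeff_map_poly coeff_eq_0)
      then have lt: "degree (map_poly pderiv f) < degree (pCons 0 f)"
        using pCons.prems(2) by simp
      show ?thesis unfolding ymul_def
        using degree_add_eq_right[OF lt] lead_coeff_add_le[OF lt] pCons.prems(2) by simp
    qed
    then have "ymul f \<noteq> 0" by (metis degree_0 nat.distinct(1))
    with pCons.IH[OF False this] ymul_lead
    have IH: "degree (act P (ymul f)) = degree P + Suc (degree f)"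
      "lead_coeff (act P (ymul f)) = lead_coeff P * lead_coeff f" by auto
    then have lt: "degree (smult a f) < degree (act P (ymul f))"
      by simp
    have "lead_coeff (act (pCons a P) f) = lead_coeff (act P (ymul f))"
      by (simp only: act_pCons lead_coeff_add_le[OF lt])
    moreover have "degree (act (pCons a P) f) = degree (act P (ymul f))"
      by (simp only: act_pCons degree_add_eq_right[OF lt])
    ultimately show ?thesis using False IH by simp
  qed
qed simp


section \<open>The Weyl algebra as a ring\<close>

text \<open>The normal forms with weyl_mult as product form a ring (associativity and
  distributivity are inherited from composition of operators).\<close>
typedef (overloaded) 'a weyl = "UNIV :: 'a::field poly poly set" by auto

setup_lifting type_definition_weyl

instantiation weyl :: (field) ring_1
begin
lift_definition zero_weyl :: "'a weyl" is 0 .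
lift_definition one_weyl :: "'a weyl" is 1 .
lift_definition plus_weyl :: "'a weyl \<Rightarrow> 'a weyl \<Rightarrow> 'a weyl" is "(+)" .
lift_definition minus_weyl :: "'a weyl \<Rightarrow> 'a weyl \<Rightarrow> 'a weyl" is "(-)" .
lift_definition uminus_weyl :: "'a weyl \<Rightarrow> 'a weyl" is uminus .
lift_definition times_weyl :: "'a weyl \<Rightarrow> 'a weyl \<Rightarrow> 'a weyl" is weyl_mult .
instance
proof
  fix a b c :: "'a weyl"
  show "a * b * c = a * (b * c)"
    by transfer (simp add: weyl_mult_eq_act act_weyl_mult[symmetric])
  show "(a + b) * c = a * c + b * c"
    by transfer (simp add: weyl_mult_eq_act act_add_left)
  show "a * (b + c) = a * b + a * c"
    by transfer (simp add: weyl_mult_eq_act act_add_right)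
  show "1 * a = a"
    by transfer (simp add: weyl_mult_eq_act act_def)
  show "a * 1 = a"
    by transfer (simp add: weyl_mult_eq_act act_one)
  show "(0::'a weyl) \<noteq> 1"
    by transfer simp
qed (transfer; simp add: algebra_simps)+
end

lemma Rep_weyl_mult: "Rep_weyl (a * b) = weyl_mult (Rep_weyl a) (Rep_weyl b)"
  by transfer simp

lemma Rep_weyl_add: "Rep_weyl (a + b) = Rep_weyl a + Rep_weyl b"
  by transfer simp

lemma Rep_weyl_0: "Rep_weyl 0 = 0"
  by transfer simp

lemma weyl_eq_0_iff: "(a::'a::field weyl) = 0 \<longleftrightarrow> Rep_weyl a = 0"
  by (metis Rep_weyl_0 Rep_weyl_inject)

definition W :: "'a::field poly \<Rightarrow> 'a weyl" where "W r = Abs_weyl [:r:]"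
definition Xw :: "'a::field weyl" where "Xw = Abs_weyl weyl_x"
definition Yw :: "'a::field weyl" where "Yw = Abs_weyl weyl_y"

lemma Rep_W: "Rep_weyl (W r) = [:r:]"
  by (simp add: W_def Abs_weyl_inverse)

lemma Rep_Yw: "Rep_weyl Yw = [:0, 1:]"
  by (simp add: Yw_def Abs_weyl_inverse weyl_y_def)

lemma Xw_eq_W: "Xw = W [:0, 1:]"
  by (simp add: Xw_def W_def weyl_x_def)

lemma W_mult: "W r * W s = W (r * s)"
  by (simp add: W_def times_weyl.abs_eq weyl_mult_eq_act act_pCons)

lemma W_add: "W r + W s = W (r + s)"
  by (simp add: W_def plus_weyl.abs_eq)

lemma W_0[simp]: "W 0 = 0"
  by (simp add: W_def zero_weyl_def)

lemma W_1[simp]: "W 1 = 1"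
  by (simp add: W_def one_weyl_def one_pCons)

lemma W_pCons: "W (pCons b a) = W [:b:] + W a * Xw"
  by (simp add: Xw_eq_W W_mult W_add)

lemma Rep_W_const_mult: "Rep_weyl (W [:a:] * P) = smult [:a:] (Rep_weyl P)"
  by (simp add: Rep_weyl_mult Rep_W weyl_mult_eq_act act_pCons)

lemma W_const_comm: "W [:a:] * P = P * W [:a:]"
proof -
  have "act (Rep_weyl P) [:[:a:]:] = smult [:a:] (Rep_weyl P)"
    by (metis act_one act_smult_const mult.right_neutral one_pCons smult_one smult_pCons)
  then show ?thesis
    by (metis Rep_weyl_inject Rep_W_const_mult Rep_W Rep_weyl_mult weyl_mult_eq_act)
qed

lemma Rep_W_Yw: "Rep_weyl (W r * Yw) = [:0, r:]"
proof -
  have "act [:r:] (monom 1 1) = [:0, r:]"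
    by (simp add: act_pCons act_def monom_Suc)
  then show ?thesis
    by (simp add: Rep_weyl_mult Rep_W Rep_Yw weyl_mult_eq_act monom_Suc one_pCons monom_0)
qed

lemma Yw_W: "Yw * W r = W r * Yw + W (pderiv r)"
proof -
  have "Rep_weyl (Yw * W r) = ymul [:r:]"
    by (simp add: Rep_weyl_mult Rep_W Rep_Yw weyl_mult_eq_act act_pCons)
  also have "\<dots> = [:0, r:] + [:pderiv r:]"
    by (simp add: poly_eq_iff coeff_ymul coeff_pCons split: nat.split)
  finally show ?thesis
    by (metis Rep_W Rep_W_Yw Rep_weyl_add Rep_weyl_inject)
qed

lemma weyl_mult_degree:
  assumes "a \<noteq> 0" "b \<noteq> 0"
  shows "degree (Rep_weyl (a * b)) = degree (Rep_weyl a) + degree (Rep_weyl b)"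
    and "a * b \<noteq> 0"
proof -
  have nz: "Rep_weyl a \<noteq> 0" "Rep_weyl b \<noteq> 0" using assms weyl_eq_0_iff by auto
  show "degree (Rep_weyl (a * b)) = degree (Rep_weyl a) + degree (Rep_weyl b)"
    using act_degree[OF nz] by (simp add: Rep_weyl_mult weyl_mult_eq_act)
  then show "a * b \<noteq> 0"
    using nz by (metis add_is_0 degree_0 weyl_eq_0_iff act_degree Rep_weyl_mult weyl_mult_eq_act
        mult_eq_0_iff leading_coeff_0_iff)
qed


section \<open>Polynomials in an element satisfying the relation of y^\<close>

definition hcomm :: "'a::field poly \<Rightarrow> 'a weyl \<Rightarrow> bool" where
  "hcomm h Y \<longleftrightarrow> (\<forall>r. Y * W r = W r * Y + W (h * pderiv r))"

definition ev :: "'a::field weyl \<Rightarrow> 'a poly poly \<Rightarrow> 'a weyl" where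
  "ev Y R = (\<Sum>j\<le>degree R. W (coeff R j) * Y ^ j)"

lemma ev_pCons: "ev Y (pCons a R) = W a + ev Y R * Y"
proof -
  have "ev Y (pCons a R) = (\<Sum>j\<le>Suc (degree R). W (coeff (pCons a R) j) * Y ^ j)"
    unfolding ev_def by (rule sum_deg_bound) (auto simp: degree_pCons_le)
  also have "\<dots> = W a + (\<Sum>j\<le>degree R. W (coeff R j) * Y ^ j) * Y"
    by (subst sum.atMost_Suc_shift)
      (simp add: sum_distrib_right power_Suc2 mult.assoc del: power_Suc)
  finally show ?thesis by (simp add: ev_def)
qed

lemma ev_0[simp]: "ev Y 0 = 0"
  by (simp add: ev_def)

lemma ev_const: "ev Y [:a:] = W a"
  by (simp add: ev_pCons)

lemma ev_add: "ev Y (R + S) = ev Y R + ev Y S"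
proof (induction R arbitrary: S)
  case (pCons a R)
  then show ?case
    by (cases S) (simp add: ev_pCons algebra_simps W_add[symmetric])
qed simp

lemma ev_sum: "ev Y (\<Sum>i\<in>A. R i) = (\<Sum>i\<in>A. ev Y (R i))"
  by (induction A rule: infinite_finite_induct) (auto simp: ev_add)

lemma ev_smult: "ev Y (smult r R) = W r * ev Y R"
  by (induction R) (simp_all add: ev_pCons algebra_simps W_mult)

text \<open>Left multiplication by Y on formal polynomials, following Y r = r Y + h r'.
  It does not depend on Y, and neither does the resulting product twisted_mult.\<close>
definition twist :: "'a::field poly \<Rightarrow> 'a poly poly \<Rightarrow> 'a poly poly" where
  "twist h S = pCons 0 S + map_poly (\<lambda>s. h * pderiv s) S"

definition twisted_mult :: "'a::field poly \<Rightarrow> 'a poly poly \<Rightarrow> 'a poly poly \<Rightarrow> 'a poly poly" where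
  "twisted_mult h R S = (\<Sum>j\<le>degree R. smult (coeff R j) ((twist h ^^ j) S))"

lemma ev_twist:
  assumes "hcomm h Y"
  shows "Y * ev Y S = ev Y (twist h S)"
proof (induction S)
  case (pCons a S)
  have comm: "Y * W a = W a * Y + W (h * pderiv a)"
    using assms hcomm_def by blast
  have twist_pCons: "twist h (pCons a S) = pCons (h * pderiv a) (twist h S + [:a:])"
    by (simp add: poly_eq_iff twist_def coeff_map_poly coeff_pCons split: nat.split)
  have "Y * ev Y (pCons a S) = Y * W a + (Y * ev Y S) * Y"
    by (simp add: ev_pCons algebra_simps)
  also have "\<dots> = W (h * pderiv a) + (ev Y (twist h S) + W a) * Y"
    using comm pCons by (simp add: algebra_simps)
  also have "\<dots> = ev Y (twist h (pCons a S))"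
    by (simp add: twist_pCons ev_pCons ev_add ev_const)
  finally show ?case .
qed (simp add: twist_def)

lemma ev_mult:
  assumes "hcomm h Y"
  shows "ev Y R * ev Y S = ev Y (twisted_mult h R S)"
proof -
  have pow: "Y ^ n * ev Y S = ev Y ((twist h ^^ n) S)" for n
  proof (induction n)
    case (Suc n)
    then show ?case using ev_twist[OF assms] by (simp add: mult.assoc)
  qed simp
  have "ev Y R * ev Y S = (\<Sum>j\<le>degree R. W (coeff R j) * (Y ^ j * ev Y S))"
    by (simp add: ev_def[of Y R] sum_distrib_right mult.assoc)
  also have "\<dots> = ev Y (twisted_mult h R S)"
    by (simp add: pow twisted_mult_def ev_sum ev_smult)
  finally show ?thesis .
qed

lemma ev_degree:
  assumes Y: "degree (Rep_weyl Y) \<ge> 1" and "R \<noteq> 0"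
  shows "ev Y R \<noteq> 0 \<and> degree (Rep_weyl (ev Y R)) = degree R * degree (Rep_weyl Y)"
  using assms(2)
proof (induction R)
  case (pCons a R)
  have Y0: "Y \<noteq> 0" using Y by (metis Rep_weyl_0 degree_0 not_one_le_zero)
  show ?case
  proof (cases "R = 0")
    case True
    then show ?thesis using pCons by (simp add: ev_pCons weyl_eq_0_iff Rep_W)
  next
    case False
    with pCons.IH have IH: "ev Y R \<noteq> 0" "degree (Rep_weyl (ev Y R)) = degree R * degree (Rep_weyl Y)"
      by auto
    have deg_RY: "degree (Rep_weyl (ev Y R * Y)) = degree R * degree (Rep_weyl Y) + degree (Rep_weyl Y)"
      using weyl_mult_degree(1)[OF IH(1) Y0] IH(2) by simp
    have lt: "degree (Rep_weyl (W a)) < degree (Rep_weyl (ev Y R * Y))"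
      using deg_RY Y by (simp add: Rep_W)
    have "degree (Rep_weyl (ev Y (pCons a R))) = degree R * degree (Rep_weyl Y) + degree (Rep_weyl Y)"
      using degree_add_eq_right[OF lt] deg_RY by (simp add: ev_pCons Rep_weyl_add)
    moreover from this have "ev Y (pCons a R) \<noteq> 0"
      using Y by (metis Rep_weyl_0 add_is_0 degree_0 not_one_le_zero)
    ultimately show ?thesis using False by simp
  qed
qed simp

lemma ev_inj:
  assumes "degree (Rep_weyl Y) \<ge> 1" and "ev Y R = ev Y S"
  shows "R = S"
proof (rule ccontr)
  assume "R \<noteq> S"
  then have "ev Y (R - S) \<noteq> 0" using ev_degree[OF assms(1)] by simp
  moreover have "ev Y R = ev Y (R - S) + ev Y S"
    using ev_add[of Y "R - S" S] by simp
  ultimately show False using assms(2) by simp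
qed


section \<open>A_h as the polynomials in y^\<close>

definition Yh :: "'a::field poly \<Rightarrow> 'a weyl" where "Yh h = Yw * W h"

lemma Rep_Yh: "Rep_weyl (Yh h) = weyl_yhat h"
  by (simp add: Yh_def weyl_yhat_def Rep_weyl_mult Rep_Yw Rep_W weyl_y_def)

text \<open>y^ r = y h r = r y h + (h r)' - h' r = r y^ + h r'.\<close>
lemma hcomm_Yh: "hcomm h (Yh h)"
  unfolding hcomm_def
proof
  fix r
  have "W r * Yh h = (Yw * W r - W (pderiv r)) * W h"
    using Yw_W[of r] by (simp add: Yh_def mult.assoc algebra_simps)
  also have "\<dots> = W (r * h) * Yw + W (pderiv (r * h)) - W (pderiv r * h)"
    using Yw_W[of "r * h"] by (simp add: algebra_simps mult.assoc W_mult)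
  finally have "W r * Yh h = W (h * r) * Yw + W (pderiv (h * r)) - W (h * pderiv r)"
    by (simp add: mult.commute)
  moreover have "Yh h * W r = W (h * r) * Yw + W (pderiv (h * r))"
    using Yw_W[of "h * r"] by (simp add: Yh_def mult.assoc W_mult)
  ultimately show "Yh h * W r = W r * Yh h + W (h * pderiv r)"
    by simp
qed

lemma degree_Yh:
  assumes "h \<noteq> 0"
  shows "degree (Rep_weyl (Yh h)) = 1"
proof -
  have "Yw \<noteq> (0 :: 'a weyl)" "W h \<noteq> 0"
    using assms by (simp_all add: weyl_eq_0_iff Rep_Yw Rep_W)
  then show ?thesis
    using weyl_mult_degree(1)[of Yw "W h"] by (simp add: Yh_def Rep_Yw Rep_W)
qed

lemma W_in_A_h: "Rep_weyl (W a) \<in> A_h h"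
proof (induction a)
  case 0 then show ?case using A_h.const[of 0 h] by (simp add: Rep_weyl_0)
next
  case (pCons b a)
  have "Rep_weyl (W [:b:]) \<in> A_h h" using A_h.const[of b h] by (simp add: Rep_W)
  then show ?case using pCons
    by (simp add: W_pCons[of b a] Rep_weyl_add Rep_weyl_mult Xw_def Abs_weyl_inverse
        A_h.add A_h.mult A_h.gen_x)
qed

lemma ev_in_A_h:
  assumes "Rep_weyl Y \<in> A_h h"
  shows "Rep_weyl (ev Y R) \<in> A_h h"
proof (induction R)
  case 0 then show ?case using W_in_A_h[of 0 h] by (simp add: Rep_weyl_0)
next
  case (pCons a R)
  show ?case
    by (simp only: ev_pCons Rep_weyl_add Rep_weyl_mult) (intro A_h.add A_h.mult W_in_A_h pCons assms)
qed

text \<open>Conversely every element of A_h is a polynomial in y^ over F[x], since these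
  contain the generators and are closed under sums and products.\<close>
lemma A_h_eq_ev_image: "A_h h = Rep_weyl ` range (ev (Yh h))"
proof
  show "A_h h \<subseteq> Rep_weyl ` range (ev (Yh h))"
  proof
    fix a assume "a \<in> A_h h"
    then show "a \<in> Rep_weyl ` range (ev (Yh h))"
    proof (induction rule: A_h.induct)
      case (const a)
      have "[:[:a:]:] = Rep_weyl (ev (Yh h) [:[:a:]:])" by (simp add: ev_const Rep_W)
      then show ?case by blast
    next
      case gen_x
      have "weyl_x = Rep_weyl (ev (Yh h) [:[:0, 1:]:])" by (simp add: ev_const Rep_W weyl_x_def)
      then show ?case by blast
    next
      case gen_yhat
      have "weyl_yhat h = Rep_weyl (ev (Yh h) [:0, 1:])" by (simp add: ev_pCons Rep_Yh)
      then show ?case by blast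
    next
      case (add a b)
      then obtain R S where "a = Rep_weyl (ev (Yh h) R)" "b = Rep_weyl (ev (Yh h) S)" by blast
      then have "a + b = Rep_weyl (ev (Yh h) (R + S))" by (simp add: ev_add Rep_weyl_add)
      then show ?case by blast
    next
      case (mult a b)
      then obtain R S where "a = Rep_weyl (ev (Yh h) R)" "b = Rep_weyl (ev (Yh h) S)" by blast
      then have "weyl_mult a b = Rep_weyl (ev (Yh h) (twisted_mult h R S))"
        by (simp add: ev_mult[OF hcomm_Yh, symmetric] Rep_weyl_mult)
      then show ?case by blast
    qed
  qed
  show "Rep_weyl ` range (ev (Yh h)) \<subseteq> A_h h"
    using ev_in_A_h[of "Yh h" h] by (auto simp: Rep_Yh A_h.gen_yhat)
qed


section \<open>Elements commuting with x\<close>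

lemma comm_Xw_comm_W:
  assumes "C * Xw = Xw * C"
  shows "C * W r = W r * C"
proof (induction r)
  case (pCons a r)
  have "C * W (pCons a r) = C * W [:a:] + (C * W r) * Xw"
    by (simp add: W_pCons[of a r] algebra_simps mult.assoc)
  also have "\<dots> = W [:a:] * C + W r * (C * Xw)"
    using pCons W_const_comm[of a C] by (simp add: mult.assoc)
  also have "\<dots> = W (pCons a r) * C"
    using assms by (simp add: W_pCons[of a r] algebra_simps mult.assoc)
  finally show ?case .
qed simp

lemma hcomm_add_comm_Xw:
  assumes "hcomm h Y" and "C * Xw = Xw * C"
  shows "hcomm h (Y + C)"
  using assms comm_Xw_comm_W[OF assms(2)] unfolding hcomm_def by (simp add: algebra_simps)

text \<open>An element q0 + q1 y of y-degree 1 has commutator q1 with x, so it cannot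
  commute with x.\<close>
lemma comm_Xw_degree_ne_1:
  fixes C :: "'a::field weyl"
  assumes "C * Xw = Xw * C"
  shows "degree (Rep_weyl C) \<noteq> 1"
proof
  assume deg: "degree (Rep_weyl C) = 1"
  define c0 where "c0 = coeff (Rep_weyl C) 0"
  define c1 where "c1 = coeff (Rep_weyl C) 1"
  have "Rep_weyl C = [:c0, c1:]"
    using deg by (auto simp: poly_eq_iff c0_def c1_def coeff_pCons coeff_eq_0 split: nat.split)
  then have "Rep_weyl C = Rep_weyl (W c0 + W c1 * Yw)"
    by (simp add: Rep_weyl_add Rep_W Rep_W_Yw)
  then have C: "C = W c0 + W c1 * Yw"
    by (simp add: Rep_weyl_inject)
  have c1: "c1 \<noteq> 0"
    using leading_coeff_neq_0[of "Rep_weyl C"] deg by (cases "Rep_weyl C = 0") (auto simp: c1_def)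
  have "(Yw :: 'a weyl) * Xw = Xw * Yw + W (pderiv [:0, 1:])"
    unfolding Xw_eq_W by (rule Yw_W)
  also have "W (pderiv [:0, 1:]) = (1 :: 'a weyl)"
    using W_1 by (simp add: pderiv_pCons one_pCons)
  finally have YX: "(Yw :: 'a weyl) * Xw = Xw * Yw + 1" .
  have W_Xw: "W q * Xw = Xw * W q" for q
    by (simp add: Xw_eq_W W_mult mult.commute)
  have "W c1 * Yw * Xw = W c1 * Xw * Yw + W c1"
    by (simp add: mult.assoc YX distrib_left)
  then have YX_c1: "W c1 * Yw * Xw = Xw * W c1 * Yw + W c1"
    by (simp only: W_Xw)
  have "C * Xw - Xw * C = W c1"
    unfolding C distrib_right distrib_left YX_c1 W_Xw[of c0] by (simp add: mult.assoc)
  then have "W c1 = 0" using assms by simp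
  then show False using c1 Rep_W[of c1] by (simp add: Rep_weyl_0)
qed

lemma degree_Yh_add_comm_Xw:
  assumes "h \<noteq> 0" and "C * Xw = Xw * C"
  shows "degree (Rep_weyl (Yh h + C)) = (if degree (Rep_weyl C) = 0 then 1 else degree (Rep_weyl C))"
proof (cases "degree (Rep_weyl C) = 0")
  case True
  then show ?thesis
    using degree_Yh[OF assms(1)] by (simp add: Rep_weyl_add degree_add_eq_left)
next
  case False
  then have "degree (Rep_weyl (Yh h)) < degree (Rep_weyl C)"
    using degree_Yh[OF assms(1)] comm_Xw_degree_ne_1[OF assms(2)] by simp
  then show ?thesis
    using False by (simp add: Rep_weyl_add degree_add_eq_right)
qed


section \<open>Substitution endomorphisms of A_h\<close>

lemma Rep_ev_add: "Rep_weyl (ev Y R) + Rep_weyl (ev Y S) = Rep_weyl (ev Y (R + S))"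
  by (simp add: Rep_weyl_add ev_add)

lemma Rep_ev_smult: "smult [:s:] (Rep_weyl (ev Y R)) = Rep_weyl (ev Y (smult [:s:] R))"
  by (simp only: ev_smult Rep_W_const_mult)

lemma Rep_ev_mult:
  assumes "hcomm h Y"
  shows "weyl_mult (Rep_weyl (ev Y R)) (Rep_weyl (ev Y S)) = Rep_weyl (ev Y (twisted_mult h R S))"
  by (simp add: Rep_weyl_mult ev_mult[OF assms, symmetric])

text \<open>The map sum r_j (y^)^j |-> sum r_j Y^j on A_h; well defined because the
  expansion in powers of y^ is unique (ev_inj).\<close>
definition subst :: "'a::field poly \<Rightarrow> 'a weyl \<Rightarrow> 'a poly poly \<Rightarrow> 'a poly poly" where
  "subst h Y a = Rep_weyl (ev Y (THE R. a = Rep_weyl (ev (Yh h) R)))"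

lemma subst_ev:
  assumes "h \<noteq> 0"
  shows "subst h Y (Rep_weyl (ev (Yh h) R)) = Rep_weyl (ev Y R)"
proof -
  have "(THE S. Rep_weyl (ev (Yh h) R) = Rep_weyl (ev (Yh h) S)) = R"
    using ev_inj[of "Yh h"] degree_Yh[OF assms] by (intro the_equality) (auto simp: Rep_weyl_inject)
  then show ?thesis by (simp add: subst_def)
qed

lemma ball_A_h: "(\<forall>a\<in>A_h h. P a) \<longleftrightarrow> (\<forall>R. P (Rep_weyl (ev (Yh h) R)))"
  by (auto simp: A_h_eq_ev_image)

lemma subst_is_alg_endo:
  assumes "h \<noteq> 0" and "hcomm h Y" and "Rep_weyl Y \<in> A_h h"
  shows "is_alg_endo h (subst h Y)"
  unfolding is_alg_endo_def ball_A_h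
proof (intro conjI allI)
  fix R S :: "'a poly poly" and s :: 'a
  show "subst h Y (Rep_weyl (ev (Yh h) R)) \<in> A_h h"
    by (simp add: subst_ev[OF assms(1)] ev_in_A_h[OF assms(3)])
  show "subst h Y 1 = 1"
    using subst_ev[OF assms(1), of Y "[:1:]"] by (simp add: ev_const Rep_W one_pCons)
  show "subst h Y (Rep_weyl (ev (Yh h) R) + Rep_weyl (ev (Yh h) S)) =
      subst h Y (Rep_weyl (ev (Yh h) R)) + subst h Y (Rep_weyl (ev (Yh h) S))"
    by (simp only: Rep_ev_add subst_ev[OF assms(1)])
  show "subst h Y (smult [:s:] (Rep_weyl (ev (Yh h) R))) =
      smult [:s:] (subst h Y (Rep_weyl (ev (Yh h) R)))"
    by (simp only: Rep_ev_smult subst_ev[OF assms(1)])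
  show "subst h Y (weyl_mult (Rep_weyl (ev (Yh h) R)) (Rep_weyl (ev (Yh h) S))) =
      weyl_mult (subst h Y (Rep_weyl (ev (Yh h) R))) (subst h Y (Rep_weyl (ev (Yh h) S)))"
    by (simp only: Rep_ev_mult[OF hcomm_Yh] Rep_ev_mult[OF assms(2)] subst_ev[OF assms(1)])
qed

lemma subst_inj:
  assumes "h \<noteq> 0" and "degree (Rep_weyl Y) \<ge> 1"
  shows "inj_on (subst h Y) (A_h h)"
  by (auto simp: inj_on_def A_h_eq_ev_image subst_ev[OF assms(1)] Rep_weyl_inject
      dest: ev_inj[OF assms(2)])

lemma subst_yhat:
  assumes "h \<noteq> 0"
  shows "subst h Y (weyl_yhat h) = Rep_weyl Y"
  using subst_ev[OF assms, of Y "[:0, 1:]"] by (simp add: ev_pCons Rep_Yh)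

lemma subst_fixes_polys:
  assumes "h \<noteq> 0" and "r \<in> weyl_polys"
  shows "subst h Y r = r"
proof -
  obtain q where q: "r = [:q:]" using assms(2) by (auto simp: weyl_polys_def)
  then have "r = Rep_weyl (ev (Yh h) [:q:])" by (simp add: ev_const Rep_W)
  then show ?thesis using subst_ev[OF assms(1), of Y "[:q:]"] by (simp add: ev_const Rep_W q)
qed

lemma endo_determined_by_yhat:
  assumes endo: "is_alg_endo h \<kappa>" and fixes_polys: "\<forall>r\<in>weyl_polys. \<kappa> r = r"
    and yhat: "\<kappa> (weyl_yhat h) = Rep_weyl Y"
  shows "\<kappa> (Rep_weyl (ev (Yh h) R)) = Rep_weyl (ev Y R)"
proof (induction R)
  case 0
  have "\<kappa> [:0:] = [:0:]" using fixes_polys by (auto simp: weyl_polys_def)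
  then show ?case by (simp add: Rep_weyl_0)
next
  case (pCons a R)
  have in_A_h: "Rep_weyl (W a) \<in> A_h h" "Rep_weyl (ev (Yh h) R) \<in> A_h h" "weyl_yhat h \<in> A_h h"
    by (simp_all add: W_in_A_h ev_in_A_h Rep_Yh A_h.gen_yhat)
  have "[:a:] \<in> weyl_polys" by (auto simp: weyl_polys_def)
  then show ?case
    using endo pCons in_A_h fixes_polys yhat unfolding is_alg_endo_def
    by (simp add: ev_pCons Rep_weyl_add Rep_weyl_mult Rep_W Rep_Yh A_h.mult)
qed

lemma yhat_notin_ev_image:
  assumes "h \<noteq> 0" and "degree (Rep_weyl Y) \<ge> 2"
  shows "weyl_yhat h \<notin> Rep_weyl ` range (ev Y)"
proof
  assume "weyl_yhat h \<in> Rep_weyl ` range (ev Y)"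
  then obtain R where R: "Rep_weyl (Yh h) = Rep_weyl (ev Y R)" by (auto simp: Rep_Yh)
  then have "R \<noteq> 0" using degree_Yh[OF assms(1)] by (auto simp: Rep_weyl_0)
  then have "1 = degree R * degree (Rep_weyl Y)"
    using ev_degree[of Y R] assms(2) R degree_Yh[OF assms(1)] by simp
  then show False using assms(2) by simp
qed


theorem proposition8p15:
  fixes h :: "'a::field poly" and c :: "'a poly poly"
  assumes "CHAR('a) > 0"
    and "degree h \<ge> 1"
    and "c \<in> centralizer_x h"
  shows "(\<exists>\<kappa>. is_alg_endo h \<kappa> \<and> inj_on \<kappa> (A_h h) \<and>
            \<kappa> (weyl_yhat h) = weyl_yhat h + c \<and>
            (\<forall>r\<in>weyl_polys. \<kappa> r = r))
       \<and> (c \<notin> weyl_polys \<longrightarrow>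
            (\<forall>\<kappa>. is_alg_endo h \<kappa> \<and> \<kappa> (weyl_yhat h) = weyl_yhat h + c \<and>
                 (\<forall>r\<in>weyl_polys. \<kappa> r = r) \<longrightarrow> \<kappa> ` A_h h \<noteq> A_h h))"
proof -
  have h0: "h \<noteq> 0" using assms(2) by auto
  define Y where "Y = Yh h + Abs_weyl c"
  have RepY: "Rep_weyl Y = weyl_yhat h + c"
    by (simp add: Y_def Rep_weyl_add Rep_Yh Abs_weyl_inverse)
  have cx: "Abs_weyl c * Xw = Xw * Abs_weyl c"
    using assms(3) by (simp add: centralizer_x_def Xw_def times_weyl.abs_eq)
  have Y_rel: "hcomm h Y"
    unfolding Y_def by (rule hcomm_add_comm_Xw[OF hcomm_Yh cx])
  have Y_in: "Rep_weyl Y \<in> A_h h"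
    using assms(3) by (simp add: RepY centralizer_x_def A_h.add A_h.gen_yhat)
  have degY: "degree (Rep_weyl Y) = (if degree c = 0 then 1 else degree c)"
    using degree_Yh_add_comm_Xw[OF h0 cx] by (simp add: Y_def Abs_weyl_inverse)
  have "is_alg_endo h (subst h Y) \<and> inj_on (subst h Y) (A_h h) \<and>
      subst h Y (weyl_yhat h) = weyl_yhat h + c \<and> (\<forall>r\<in>weyl_polys. subst h Y r = r)"
    using subst_is_alg_endo[OF h0 Y_rel Y_in] subst_inj[OF h0] subst_yhat[OF h0]
      subst_fixes_polys[OF h0] degY RepY by auto
  moreover have "\<kappa> ` A_h h \<noteq> A_h h"
    if "c \<notin> weyl_polys" "is_alg_endo h \<kappa>" "\<kappa> (weyl_yhat h) = weyl_yhat h + c"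
      "\<forall>r\<in>weyl_polys. \<kappa> r = r" for \<kappa>
  proof -
    have "degree c \<noteq> 0"
      using that(1) degree_eq_zeroE[of c] by (metis (mono_tags, lifting) mem_Collect_eq weyl_polys_def)
    then have "weyl_yhat h \<notin> Rep_weyl ` range (ev Y)"
      using yhat_notin_ev_image[OF h0] degY comm_Xw_degree_ne_1[OF cx]
      by (simp add: Abs_weyl_inverse)
    moreover have "\<kappa> ` A_h h \<subseteq> Rep_weyl ` range (ev Y)"
      using endo_determined_by_yhat[OF that(2,4), of Y] that(3) RepY
      by (auto simp: A_h_eq_ev_image)
    ultimately show ?thesis using A_h.gen_yhat by blast
  qed
  ultimately show ?thesis by blast
qed
end
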